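(* Let $k,j\ge1$ and let $Y_k=\mathrm{diag}(y_k(x_0),\dots,y_k(x_{N-1}))$ and $Y_j=\mathrm{diag}(y_j(x_0),\dots,y_j(x_{N-1}))$ be diagonal matrices of samples of smooth periodic functions $y_k,y_j$. Then $$\mathrm{ht}([Y_kD_k,Y_jD_j])\le k+j-1.$$
   Context: Uniform periodic grid $x_i=a+(b-a)\frac iN$, $i=0,\dots,N-1$. $D_F=N\cdot M$ where $M$ is the $N\times N$ circulant matrix with $-1$ on the diagonal, $1$ on the superdiagonal and $1$ in the bottom-left corner; $D_B=-D_F^\dagger$; $D_2=D_BD_F=D_FD_B$. $D_k=D_2^{k/2}$ for $k$ even and $D_k=D_FD_2^{(k-1)/2}$ for $k$ odd. An $N\times N$ matrix $P$ (family indexed by $N$) has height $m$ if $m$ is the highest order such that $\|P\|_2$ grows as $N^m$ as $N\to\infty$; $\mathrm{ht}(P)\le m$ means $\|P\|_2=O(N^m)$. *)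

theory Defs
  imports "HOL-Analysis.Derivative" "Jordan_Normal_Form.Matrix" "HOL-Library.Landau_Symbols"
begin

definition grid_pt :: "real \<Rightarrow> real \<Rightarrow> nat \<Rightarrow> nat \<Rightarrow> real" where
  "grid_pt a b N i = a + (b - a) * real i / real N"

definition circM :: "nat \<Rightarrow> real mat" where
  "circM N = mat N N (\<lambda>(i, l). (if l = i then -1 else 0) + (if l = (i + 1) mod N then 1 else 0))"

definition DF :: "nat \<Rightarrow> real mat" where
  "DF N = real N \<cdot>\<^sub>m circM N"

text \<open>D_B = - D_F^dagger (real matrices: adjoint = transpose).\<close>
definition DB :: "nat \<Rightarrow> real mat" where
  "DB N = - transpose_mat (DF N)"

definition D2 :: "nat \<Rightarrow> real mat" where
  "D2 N = DB N * DF N"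

definition Dk :: "nat \<Rightarrow> nat \<Rightarrow> real mat" where
  "Dk k N = (if even k then D2 N ^\<^sub>m (k div 2) else DF N * (D2 N ^\<^sub>m ((k - 1) div 2)))"

definition Ysamp :: "(real \<Rightarrow> real) \<Rightarrow> real \<Rightarrow> real \<Rightarrow> nat \<Rightarrow> real mat" where
  "Ysamp y a b N = mat N N (\<lambda>(i, l). if i = l then y (grid_pt a b N i) else 0)"

definition commutator :: "real mat \<Rightarrow> real mat \<Rightarrow> real mat" where
  "commutator A B = A * B - B * A"

definition vnorm2 :: "real vec \<Rightarrow> real" where
  "vnorm2 x = sqrt (\<Sum>i<dim_vec x. (x $ i)^2)"

definition mat_norm2 :: "real mat \<Rightarrow> real" where
  "mat_norm2 A = Sup {vnorm2 (A *\<^sub>v x) | x. dim_vec x = dim_col A \<and> vnorm2 x \<le> 1}"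

definition ht_le :: "(nat \<Rightarrow> real mat) \<Rightarrow> nat \<Rightarrow> bool" where
  "ht_le P m \<longleftrightarrow> (\<lambda>N. mat_norm2 (P N)) \<in> O(\<lambda>N. real N ^ m)"

definition smooth_fun :: "(real \<Rightarrow> real) \<Rightarrow> bool" where
  "smooth_fun f \<longleftrightarrow> (\<forall>n x. ((deriv ^^ n) f) differentiable (at x))"

definition periodic_on_len :: "real \<Rightarrow> (real \<Rightarrow> real) \<Rightarrow> bool" where
  "periodic_on_len L f \<longleftrightarrow> (\<forall>x. f (x + L) = f x)"

end

theory Submission
  imports Defs "HOL-Analysis.Lipschitz"
begin

(*
  A matrix all of whose absolute row and column sums are at most c has spectral norm at most c
  (Schur test), and such bounds behave well under sums and products; every norm estimate below
  is of this kind. The matrices D_k commute with each other, being products of D_F and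
  D_2 = D_B D_F with D_F normal (D_F = N (P - I) for the cyclic shift P), and the sample
  matrices are diagonal, so
    [Y_k D_k, Y_j D_j] = Y_k [D_k, Y_j] D_j - Y_j [D_j, Y_k] D_k.
  By the Leibniz rule, [D_k, Y] is a sum of k products of k - 1 factors D_F or D_B, each of
  size O(N), with a single [D_F, Y] or [D_B, Y] = [D_F, Y]^T. The only nonzero entries of
  [D_F, Y] are N (y(x_(i+1)) - y(x_i)) on the cyclic superdiagonal, bounded by (b - a) times a
  Lipschitz constant of y; periodicity of y covers the wrap-around entry. Hence [D_k, Y] is
  O(N^(k-1)), D_j is O(N^j), and the commutator is O(N^(k+j-1)).
*)

section \<open>The Schur test\<close>

definition abs_row_sums_le :: "real mat \<Rightarrow> real \<Rightarrow> bool" where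
  "abs_row_sums_le A c \<longleftrightarrow> (\<forall>i<dim_row A. (\<Sum>l<dim_col A. \<bar>A $$ (i, l)\<bar>) \<le> c)"

definition schur_bounded :: "real mat \<Rightarrow> real \<Rightarrow> bool" where
  "schur_bounded A c \<longleftrightarrow> 0 \<le> c \<and> abs_row_sums_le A c \<and> abs_row_sums_le (transpose_mat A) c"

lemma abs_row_sums_leD:
  "abs_row_sums_le A c \<Longrightarrow> i < dim_row A \<Longrightarrow> (\<Sum>l<dim_col A. \<bar>A $$ (i, l)\<bar>) \<le> c"
  by (simp add: abs_row_sums_le_def)

lemma abs_col_sums_leD:
  "abs_row_sums_le (transpose_mat A) c \<Longrightarrow> l < dim_col A \<Longrightarrow>
    (\<Sum>i<dim_row A. \<bar>A $$ (i, l)\<bar>) \<le> c"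
  by (simp add: abs_row_sums_le_def)

lemma index_mult_mat_sum:
  "A \<in> carrier_mat n m \<Longrightarrow> B \<in> carrier_mat m p \<Longrightarrow> i < n \<Longrightarrow> l < p \<Longrightarrow>
    (A * B) $$ (i, l) = (\<Sum>q<m. A $$ (i, q) * B $$ (q, l))"
  by (simp add: scalar_prod_def lessThan_atLeast0)

lemma square_sum_mult_le_weighted:
  fixes a x :: "nat \<Rightarrow> real"
  shows "(\<Sum>l<m. a l * x l)\<^sup>2 \<le> (\<Sum>l<m. \<bar>a l\<bar>) * (\<Sum>l<m. \<bar>a l\<bar> * (x l)\<^sup>2)"
proof -
  have "\<bar>\<Sum>l<m. a l * x l\<bar> \<le> (\<Sum>l<m. \<bar>a l\<bar> * \<bar>x l\<bar>)"
    using sum_abs[of "\<lambda>l. a l * x l"] by (simp add: abs_mult)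
  then have "(\<Sum>l<m. a l * x l)\<^sup>2 \<le> (\<Sum>l<m. \<bar>a l\<bar> * \<bar>x l\<bar>)\<^sup>2"
    by (metis abs_ge_zero power2_abs power_mono)
  also have "\<dots> = (\<Sum>l<m. sqrt \<bar>a l\<bar> * (sqrt \<bar>a l\<bar> * \<bar>x l\<bar>))\<^sup>2"
    by (simp flip: mult.assoc)
  also have "\<dots> \<le> (\<Sum>l<m. (sqrt \<bar>a l\<bar>)\<^sup>2) * (\<Sum>l<m. (sqrt \<bar>a l\<bar> * \<bar>x l\<bar>)\<^sup>2)"
    by (rule Cauchy_Schwarz_ineq_sum)
  also have "\<dots> = (\<Sum>l<m. \<bar>a l\<bar>) * (\<Sum>l<m. \<bar>a l\<bar> * (x l)\<^sup>2)"
    by (simp add: power_mult_distrib)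
  finally show ?thesis .
qed

lemma sum_square_mult_mat_vec_le:
  assumes "schur_bounded A c" and x: "dim_vec x = dim_col A"
  shows "(\<Sum>i<dim_row A. ((A *\<^sub>v x) $ i)\<^sup>2) \<le> c\<^sup>2 * (\<Sum>l<dim_col A. (x $ l)\<^sup>2)"
proof -
  let ?n = "dim_row A" and ?m = "dim_col A"
  have c: "0 \<le> c" and rows: "abs_row_sums_le A c" and cols: "abs_row_sums_le (transpose_mat A) c"
    using assms(1) by (auto simp: schur_bounded_def)
  have "(\<Sum>i<?n. ((A *\<^sub>v x) $ i)\<^sup>2) \<le> (\<Sum>i<?n. c * (\<Sum>l<?m. \<bar>A $$ (i, l)\<bar> * (x $ l)\<^sup>2))"
  proof (rule sum_mono)
    fix i assume i: "i \<in> {..<?n}"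
    have "((A *\<^sub>v x) $ i)\<^sup>2 \<le> (\<Sum>l<?m. \<bar>A $$ (i, l)\<bar>) * (\<Sum>l<?m. \<bar>A $$ (i, l)\<bar> * (x $ l)\<^sup>2)"
      using i x square_sum_mult_le_weighted[of "\<lambda>l. A $$ (i, l)" "\<lambda>l. x $ l" ?m]
      by (simp add: scalar_prod_def lessThan_atLeast0)
    also have "\<dots> \<le> c * (\<Sum>l<?m. \<bar>A $$ (i, l)\<bar> * (x $ l)\<^sup>2)"
      using abs_row_sums_leD[OF rows] i by (intro mult_right_mono sum_nonneg) auto
    finally show "((A *\<^sub>v x) $ i)\<^sup>2 \<le> c * (\<Sum>l<?m. \<bar>A $$ (i, l)\<bar> * (x $ l)\<^sup>2)" .
  qed
  also have "\<dots> = c * (\<Sum>l<?m. (\<Sum>i<?n. \<bar>A $$ (i, l)\<bar>) * (x $ l)\<^sup>2)"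
    by (simp add: sum_distrib_left[symmetric] sum_distrib_right sum.swap[of _ "{..<?n}"])
  also have "\<dots> \<le> c * (\<Sum>l<?m. c * (x $ l)\<^sup>2)"
    using abs_col_sums_leD[OF cols] c by (intro mult_left_mono sum_mono mult_right_mono) auto
  also have "\<dots> = c\<^sup>2 * (\<Sum>l<?m. (x $ l)\<^sup>2)"
    by (simp add: sum_distrib_left power2_eq_square mult.assoc)
  finally show ?thesis .
qed

lemma schur_test:
  assumes "schur_bounded A c"
  shows "0 \<le> mat_norm2 A" and "mat_norm2 A \<le> c"
proof -
  let ?S = "{vnorm2 (A *\<^sub>v x) | x. dim_vec x = dim_col A \<and> vnorm2 x \<le> 1}"
  have c: "0 \<le> c" using assms by (simp add: schur_bounded_def)
  have vnorm2_sq: "(vnorm2 v)\<^sup>2 = (\<Sum>i<dim_vec v. (v $ i)\<^sup>2)" for v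
    by (simp add: vnorm2_def sum_nonneg)
  have upper: "v \<le> c" if "v \<in> ?S" for v
  proof -
    obtain x where x: "dim_vec x = dim_col A" "vnorm2 x \<le> 1" and v: "v = vnorm2 (A *\<^sub>v x)"
      using \<open>v \<in> ?S\<close> by auto
    have "v\<^sup>2 \<le> c\<^sup>2 * (vnorm2 x)\<^sup>2"
      using sum_square_mult_mat_vec_le[OF assms x(1)] x(1) by (simp add: v vnorm2_sq)
    also have "\<dots> \<le> c\<^sup>2"
    proof (rule mult_left_le)
      have "0 \<le> vnorm2 x"
        unfolding vnorm2_def by (intro real_sqrt_ge_zero sum_nonneg) simp
      then show "(vnorm2 x)\<^sup>2 \<le> 1"
        using x(2) by (rule power_le_one)
    qed simp
    finally have "v\<^sup>2 \<le> c\<^sup>2" .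
    then show ?thesis
      using c by (rule power2_le_imp_le)
  qed
  have zero: "0 \<in> ?S"
    by (rule CollectI, rule exI[of _ "0\<^sub>v (dim_col A)"]) (simp add: vnorm2_def)
  have "bdd_above ?S"
    using upper by (rule bdd_aboveI)
  then show "0 \<le> mat_norm2 A"
    unfolding mat_norm2_def by (rule cSup_upper[OF zero])
  show "mat_norm2 A \<le> c"
    unfolding mat_norm2_def using zero upper by (intro cSup_least) auto
qed

lemma abs_row_sums_le_add:
  assumes "A \<in> carrier_mat n m" "B \<in> carrier_mat n m"
    and "abs_row_sums_le A c" "abs_row_sums_le B d"
  shows "abs_row_sums_le (A + B) (c + d)"
proof -
  have "(\<Sum>l<m. \<bar>(A + B) $$ (i, l)\<bar>) \<le> c + d" if "i < n" for i
  proof -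
    have "(\<Sum>l<m. \<bar>(A + B) $$ (i, l)\<bar>) \<le> (\<Sum>l<m. \<bar>A $$ (i, l)\<bar> + \<bar>B $$ (i, l)\<bar>)"
      using assms(1,2) that by (intro sum_mono) auto
    also have "\<dots> \<le> c + d"
      using assms that by (simp add: sum.distrib abs_row_sums_le_def add_mono)
    finally show ?thesis .
  qed
  then show ?thesis
    using assms(1,2) by (simp add: abs_row_sums_le_def)
qed

lemma abs_row_sums_le_mult:
  assumes A: "A \<in> carrier_mat n m" and B: "B \<in> carrier_mat m p"
    and "abs_row_sums_le A c" "abs_row_sums_le B d" "0 \<le> d"
  shows "abs_row_sums_le (A * B) (c * d)"
proof -
  have "(\<Sum>l<p. \<bar>(A * B) $$ (i, l)\<bar>) \<le> c * d" if i: "i < n" for i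
  proof -
    have "(\<Sum>l<p. \<bar>(A * B) $$ (i, l)\<bar>) \<le> (\<Sum>l<p. \<Sum>q<m. \<bar>A $$ (i, q)\<bar> * \<bar>B $$ (q, l)\<bar>)"
      using A B i
      by (intro sum_mono) (simp add: index_mult_mat_sum[OF A B i] sum_abs del: index_mult_mat flip: abs_mult)
    also have "\<dots> = (\<Sum>q<m. \<bar>A $$ (i, q)\<bar> * (\<Sum>l<p. \<bar>B $$ (q, l)\<bar>))"
      by (simp add: sum_distrib_left sum.swap[of _ "{..<p}"])
    also have "\<dots> \<le> (\<Sum>q<m. \<bar>A $$ (i, q)\<bar> * d)"
      using assms(4) B by (intro sum_mono mult_left_mono) (auto simp: abs_row_sums_le_def)
    also have "\<dots> \<le> c * d"
      using assms(3,5) A i by (simp add: abs_row_sums_le_def mult_right_mono flip: sum_distrib_right)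
    finally show ?thesis .
  qed
  then show ?thesis
    using A B by (simp add: abs_row_sums_le_def)
qed

lemma schur_bounded_add:
  assumes "A \<in> carrier_mat n m" "B \<in> carrier_mat n m" "schur_bounded A c" "schur_bounded B d"
  shows "schur_bounded (A + B) (c + d)"
  using assms abs_row_sums_le_add[of A n m B]
    abs_row_sums_le_add[of "transpose_mat A" m n "transpose_mat B"]
  by (simp add: schur_bounded_def transpose_add)

lemma schur_bounded_uminus: "schur_bounded A c \<Longrightarrow> schur_bounded (- A) c"
  by (simp add: schur_bounded_def abs_row_sums_le_def transpose_uminus)

lemma schur_bounded_minus:
  assumes "A \<in> carrier_mat n m" "B \<in> carrier_mat n m" "schur_bounded A c" "schur_bounded B d"
  shows "schur_bounded (A - B) (c + d)"
  using assms schur_bounded_add[of A n m "- B" c d] schur_bounded_uminus[of B d]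
  by (simp add: minus_add_uminus_mat)

lemma schur_bounded_smult: "schur_bounded A c \<Longrightarrow> schur_bounded (r \<cdot>\<^sub>m A) (\<bar>r\<bar> * c)"
  by (simp add: schur_bounded_def abs_row_sums_le_def abs_mult mult_left_mono flip: sum_distrib_left)

lemma schur_bounded_transpose: "schur_bounded A c \<Longrightarrow> schur_bounded (transpose_mat A) c"
  by (simp add: schur_bounded_def)

lemma schur_bounded_mult:
  assumes "A \<in> carrier_mat n m" "B \<in> carrier_mat m p" "schur_bounded A c" "schur_bounded B d"
  shows "schur_bounded (A * B) (c * d)"
proof -
  have "abs_row_sums_le (transpose_mat B * transpose_mat A) (d * c)"
    using assms by (intro abs_row_sums_le_mult[of _ p m _ n]) (auto simp: schur_bounded_def)
  then show ?thesis
    using assms abs_row_sums_le_mult[of A n m B p c d]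
    by (simp add: schur_bounded_def transpose_mult mult.commute)
qed

lemma schur_bounded_one: "schur_bounded (1\<^sub>m n) 1"
  by (simp add: schur_bounded_def abs_row_sums_le_def if_distrib cong: if_cong)

lemma schur_bounded_zero: "schur_bounded (0\<^sub>m n m) 0"
  by (simp add: schur_bounded_def abs_row_sums_le_def)

section \<open>Commutators\<close>

lemma commutator_carrier [simp]:
  "A \<in> carrier_mat n n \<Longrightarrow> B \<in> carrier_mat n n \<Longrightarrow> commutator A B \<in> carrier_mat n n"
  unfolding commutator_def by auto

lemma commutator_one_left: "Y \<in> carrier_mat n n \<Longrightarrow> commutator (1\<^sub>m n) Y = 0\<^sub>m n n"
  by (simp add: commutator_def)

lemma minus_add_minus_mat:
  fixes X Y Z :: "'a :: ab_group_add mat"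
  shows "X \<in> carrier_mat n m \<Longrightarrow> Y \<in> carrier_mat n m \<Longrightarrow> Z \<in> carrier_mat n m \<Longrightarrow>
    (X - Y) + (Y - Z) = X - Z"
  by (intro eq_matI) auto

lemma minus_minus_minus_mat:
  fixes X Y Z :: "'a :: ab_group_add mat"
  shows "X \<in> carrier_mat n m \<Longrightarrow> Y \<in> carrier_mat n m \<Longrightarrow> Z \<in> carrier_mat n m \<Longrightarrow>
    (X - Z) - (Y - Z) = X - Y"
  by (intro eq_matI) auto

lemma commutator_mult_left:
  assumes "A \<in> carrier_mat n n" "B \<in> carrier_mat n n" "Y \<in> carrier_mat n n"
  shows "commutator (A * B) Y = A * commutator B Y + commutator A Y * B"
  using assms
  by (simp add: commutator_def mult_minus_distrib_mat[of _ n n _ n] minus_mult_distrib_mat[of _ n n _ _ n]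
      assoc_mult_mat[of _ n n _ n _ n] minus_add_minus_mat[of _ n n])

lemma commutator_mult_mult:
  assumes "A \<in> carrier_mat n n" "B \<in> carrier_mat n n" "P \<in> carrier_mat n n" "Q \<in> carrier_mat n n"
    and "A * B = B * A" "P * Q = Q * P"
  shows "commutator (A * P) (B * Q) = A * commutator P B * Q - B * commutator Q A * P"
proof -
  have "B * (A * (Q * P)) = A * (B * (P * Q))"
    using assms by (simp flip: assoc_mult_mat[of B n n A n _ n] assoc_mult_mat[of A n n B n _ n])
  then show ?thesis
    using assms
    by (simp add: commutator_def mult_minus_distrib_mat[of _ n n _ n] minus_mult_distrib_mat[of _ n n _ _ n]
        assoc_mult_mat[of _ n n _ n _ n] minus_minus_minus_mat[of _ n n])
qed

lemma commutator_uminus_transpose: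
  assumes "A \<in> carrier_mat n n" "Y \<in> carrier_mat n n" "transpose_mat Y = Y"
  shows "commutator (- transpose_mat A) Y = transpose_mat (commutator A Y)"
  using assms
  by (simp add: commutator_def transpose_minus[of _ n n] transpose_mult[of _ n n]) (intro eq_matI; auto)

section \<open>The cyclic shift and the difference matrices\<close>

lemma mod_succ_eq: "(i :: nat) < N \<Longrightarrow> Suc i mod N = (if Suc i = N then 0 else Suc i)"
  by (cases "Suc i = N") auto

lemma mod_succ_inj: "(i :: nat) < N \<Longrightarrow> l < N \<Longrightarrow> Suc i mod N = Suc l mod N \<longleftrightarrow> i = l"
  by (auto simp: mod_succ_eq split: if_splits)

lemma sum_mod_succ: "(\<Sum>i<N. f (Suc i mod N)) = (\<Sum>i<N. f i)"
proof -
  have "inj_on (\<lambda>i. Suc i mod N) {..<N}"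
    by (auto simp: inj_on_def mod_succ_inj)
  moreover have "(\<lambda>i. Suc i mod N) ` {..<N} \<subseteq> {..<N}"
    by auto
  ultimately have "bij_betw (\<lambda>i. Suc i mod N) {..<N} {..<N}"
    by (simp add: bij_betw_def endo_inj_surj)
  then show ?thesis
    by (rule sum.reindex_bij_betw)
qed

definition cyclic_shift :: "nat \<Rightarrow> real mat" where
  "cyclic_shift N = mat N N (\<lambda>(i, l). of_bool (l = (i + 1) mod N))"

lemma cyclic_shift_carrier [simp]: "cyclic_shift N \<in> carrier_mat N N"
  and dim_cyclic_shift [simp]: "dim_row (cyclic_shift N) = N" "dim_col (cyclic_shift N) = N"
  by (simp_all add: cyclic_shift_def)

lemma circM_carrier [simp]: "circM N \<in> carrier_mat N N"
  and dim_circM [simp]: "dim_row (circM N) = N" "dim_col (circM N) = N"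
  by (simp_all add: circM_def)

lemma circM_eq_cyclic_shift: "circM N = cyclic_shift N - 1\<^sub>m N"
  by (rule eq_matI) (auto simp: circM_def cyclic_shift_def)

lemma cyclic_shift_mult_transpose: "cyclic_shift N * transpose_mat (cyclic_shift N) = 1\<^sub>m N"
proof (rule eq_matI)
  fix i l assume "i < dim_row (1\<^sub>m N :: real mat)" "l < dim_col (1\<^sub>m N :: real mat)"
  then show "(cyclic_shift N * transpose_mat (cyclic_shift N)) $$ (i, l) = 1\<^sub>m N $$ (i, l)"
    by (simp add: index_mult_mat_sum[of _ N N _ N] cyclic_shift_def mod_succ_inj del: index_mult_mat(1))
qed auto

lemma transpose_cyclic_shift_mult: "transpose_mat (cyclic_shift N) * cyclic_shift N = 1\<^sub>m N"
proof (rule eq_matI)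
  fix i l assume "i < dim_row (1\<^sub>m N :: real mat)" "l < dim_col (1\<^sub>m N :: real mat)"
  moreover have "(\<Sum>q<N. of_bool (i = Suc q mod N) * of_bool (l = Suc q mod N))
      = (\<Sum>q<N. of_bool (i = q) * of_bool (l = q) :: real)"
    by (rule sum_mod_succ)
  ultimately show "(transpose_mat (cyclic_shift N) * cyclic_shift N) $$ (i, l) = 1\<^sub>m N $$ (i, l)"
    by (simp add: index_mult_mat_sum[of _ N N _ N] cyclic_shift_def del: index_mult_mat(1))
qed auto

lemma circM_transpose_comm: "circM N * transpose_mat (circM N) = transpose_mat (circM N) * circM N"
proof -
  let ?P = "cyclic_shift N" and ?I = "1\<^sub>m N :: real mat"
  have "circM N * transpose_mat (circM N) = (?P * transpose_mat ?P - transpose_mat ?P) - (?P - ?I)"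
    by (simp add: circM_eq_cyclic_shift transpose_minus[of _ N N] mult_minus_distrib_mat[of _ N N _ N]
        minus_mult_distrib_mat[of _ N N _ _ N] minus_carrier_mat)
  also have "\<dots> = (transpose_mat ?P * ?P - ?P) - (transpose_mat ?P - ?I)"
    unfolding cyclic_shift_mult_transpose transpose_cyclic_shift_mult by (rule eq_matI) auto
  also have "\<dots> = transpose_mat (circM N) * circM N"
    by (simp add: circM_eq_cyclic_shift transpose_minus[of _ N N] mult_minus_distrib_mat[of _ N N _ N]
        minus_mult_distrib_mat[of _ N N _ _ N] minus_carrier_mat)
  finally show ?thesis .
qed

lemma DF_carrier [simp]: "DF N \<in> carrier_mat N N"
  and dim_DF [simp]: "dim_row (DF N) = N" "dim_col (DF N) = N"
  by (simp_all add: DF_def)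

lemma DB_carrier [simp]: "DB N \<in> carrier_mat N N"
  and dim_DB [simp]: "dim_row (DB N) = N" "dim_col (DB N) = N"
  by (simp_all add: DB_def)

lemma D2_carrier [simp]: "D2 N \<in> carrier_mat N N"
  and dim_D2 [simp]: "dim_row (D2 N) = N" "dim_col (D2 N) = N"
  by (simp_all add: D2_def mult_carrier_mat[of _ N N])

lemma Dk_carrier [simp]: "Dk k N \<in> carrier_mat N N"
  by (simp add: Dk_def mult_carrier_mat[of _ N N])

lemma DF_DB_comm: "DF N * DB N = DB N * DF N"
proof -
  have "transpose_mat (DF N) = real N \<cdot>\<^sub>m transpose_mat (circM N)"
    by (rule eq_matI) (auto simp: DF_def)
  then have "DF N * transpose_mat (DF N) = transpose_mat (DF N) * DF N"
    by (simp add: DF_def mult_smult_distrib[of _ N N _ N] mult_smult_assoc_mat[of _ N N _ N]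
        circM_transpose_comm)
  then show ?thesis
    by (simp add: DB_def)
qed

lemma DF_D2_comm: "DF N * D2 N = D2 N * DF N"
  by (simp add: D2_def DF_DB_comm flip: assoc_mult_mat[of _ N N _ N _ N])

lemma Dk_0: "Dk 0 N = 1\<^sub>m N"
  by (simp add: Dk_def)

lemma Dk_1: "Dk (Suc 0) N = DF N"
  by (simp add: Dk_def)

lemma Dk_Suc_Suc: "Dk (Suc (Suc k)) N = Dk k N * D2 N"
  by (cases "even k") (auto simp: Dk_def assoc_mult_mat[of _ N N _ N _ N] elim: oddE)

lemma commutes_with_Dk:
  assumes "A \<in> carrier_mat N N" "A * DF N = DF N * A" "A * D2 N = D2 N * A"
  shows "A * Dk k N = Dk k N * A"
proof (induction k rule: induct_nat_012)
  case (ge2 k)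
  have "A * (Dk k N * D2 N) = Dk k N * A * D2 N"
    using assms ge2.IH(1) by (simp flip: assoc_mult_mat[of _ N N _ N _ N])
  also have "\<dots> = Dk k N * D2 N * A"
    using assms by (simp add: assoc_mult_mat[of _ N N _ N _ N])
  finally show ?case
    by (simp add: Dk_Suc_Suc)
qed (use assms in \<open>simp_all add: Dk_0 Dk_1\<close>)

lemma Dk_comm: "Dk k N * Dk j N = Dk j N * Dk k N"
proof (rule commutes_with_Dk)
  show "Dk k N * DF N = DF N * Dk k N"
    using commutes_with_Dk[of "DF N"] DF_D2_comm by simp
  show "Dk k N * D2 N = D2 N * Dk k N"
    using commutes_with_Dk[of "D2 N"] DF_D2_comm by simp
qed simp

lemma schur_bounded_cyclic_band:
  assumes "A \<in> carrier_mat N N" "0 \<le> c" "0 \<le> d"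
    and entries: "\<And>i l. i < N \<Longrightarrow> l < N \<Longrightarrow>
      \<bar>A $$ (i, l)\<bar> \<le> of_bool (l = i) * c + of_bool (l = Suc i mod N) * d"
  shows "schur_bounded A (c + d)"
proof -
  have "(\<Sum>l<N. \<bar>A $$ (i, l)\<bar>) \<le> c + d" if "i < N" for i
  proof -
    have "(\<Sum>l<N. \<bar>A $$ (i, l)\<bar>) \<le> (\<Sum>l<N. of_bool (l = i) * c + of_bool (l = Suc i mod N) * d)"
      using entries that by (intro sum_mono) auto
    also have "\<dots> = c + d"
      using that by (simp add: sum.distrib)
    finally show ?thesis .
  qed
  moreover have "(\<Sum>i<N. \<bar>A $$ (i, l)\<bar>) \<le> c + d" if "l < N" for l
  proof -
    have "(\<Sum>i<N. \<bar>A $$ (i, l)\<bar>) \<le> (\<Sum>i<N. of_bool (l = i) * c + of_bool (l = Suc i mod N) * d)"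
      using entries that by (intro sum_mono) auto
    also have "\<dots> = c + (\<Sum>i<N. of_bool (l = Suc i mod N) * d)"
      using that by (simp add: sum.distrib)
    also have "(\<Sum>i<N. of_bool (l = Suc i mod N) * d) = (\<Sum>i<N. of_bool (l = i) * d)"
      by (rule sum_mod_succ)
    finally show ?thesis
      using that by simp
  qed
  ultimately show ?thesis
    using assms(1-3) by (simp add: schur_bounded_def abs_row_sums_le_def)
qed

lemma schur_bounded_circM: "schur_bounded (circM N) 2"
  using schur_bounded_cyclic_band[of "circM N" N 1 1] by (simp add: circM_def)

lemma schur_bounded_DF: "schur_bounded (DF N) (2 * real N)"
  using schur_bounded_smult[OF schur_bounded_circM, of "real N"] by (simp add: DF_def mult.commute)

lemma schur_bounded_DB: "schur_bounded (DB N) (2 * real N)"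
  unfolding DB_def by (intro schur_bounded_uminus schur_bounded_transpose schur_bounded_DF)

lemma schur_bounded_D2: "schur_bounded (D2 N) ((2 * real N)\<^sup>2)"
  using schur_bounded_mult[OF DB_carrier DF_carrier schur_bounded_DB schur_bounded_DF]
  by (simp add: D2_def power2_eq_square)

lemma schur_bounded_Dk: "schur_bounded (Dk k N) ((2 * real N) ^ k)"
proof (induction k rule: induct_nat_012)
  case (ge2 k)
  show ?case
    using schur_bounded_mult[OF Dk_carrier D2_carrier ge2.IH(1) schur_bounded_D2]
    by (simp add: Dk_Suc_Suc power2_eq_square mult_ac)
qed (simp_all add: Dk_0 Dk_1 schur_bounded_one schur_bounded_DF)

lemma schur_bounded_commutator_Dk:
  assumes Y: "Y \<in> carrier_mat N N"
    and F: "schur_bounded (commutator (DF N) Y) c" and B: "schur_bounded (commutator (DB N) Y) c"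
  shows "schur_bounded (commutator (Dk k N) Y) (real k * (2 * real N) ^ (k - 1) * c)"
proof (induction k rule: induct_nat_012)
  case 0
  show ?case
    using Y by (simp add: Dk_0 commutator_one_left schur_bounded_zero)
next
  case 1
  show ?case
    using F by (simp add: Dk_1)
next
  case (ge2 k)
  let ?x = "2 * real N"
  have "schur_bounded (DB N * commutator (DF N) Y + commutator (DB N) Y * DF N) (?x * c + c * ?x)"
    using Y by (intro schur_bounded_add[of _ N N] schur_bounded_mult[of _ N N _ N]
        schur_bounded_DB schur_bounded_DF F B) (auto intro!: mult_carrier_mat[of _ N N])
  then have D2: "schur_bounded (commutator (D2 N) Y) (2 * ?x * c)"
    using Y by (simp add: D2_def commutator_mult_left[of _ N] algebra_simps)
  have "schur_bounded (Dk k N * commutator (D2 N) Y + commutator (Dk k N) Y * D2 N)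
      (?x ^ k * (2 * ?x * c) + real k * ?x ^ (k - 1) * c * ?x\<^sup>2)"
    using Y by (intro schur_bounded_add[of _ N N] schur_bounded_mult[of _ N N _ N]
        schur_bounded_Dk schur_bounded_D2 D2 ge2.IH(1)) (auto intro!: mult_carrier_mat[of _ N N])
  moreover have "?x ^ k * (2 * ?x * c) + real k * ?x ^ (k - 1) * c * ?x\<^sup>2
      = real (Suc (Suc k)) * ?x ^ (Suc (Suc k) - 1) * c"
    by (cases k) (simp_all add: algebra_simps power2_eq_square)
  ultimately show ?case
    using Y by (simp add: Dk_Suc_Suc commutator_mult_left[of _ N])
qed

lemma schur_bounded_commutator_mult_Dk:
  assumes Y: "Y \<in> carrier_mat N N" and Z: "Z \<in> carrier_mat N N" and "Y * Z = Z * Y"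
    and "schur_bounded Y K" "schur_bounded Z K'"
    and "schur_bounded (commutator (DF N) Y) c" "schur_bounded (commutator (DB N) Y) c"
    and "schur_bounded (commutator (DF N) Z) c'" "schur_bounded (commutator (DB N) Z) c'"
    and "1 \<le> k" "1 \<le> j"
  shows "schur_bounded (commutator (Y * Dk k N) (Z * Dk j N))
    ((K * real k * c' + K' * real j * c) * (2 * real N) ^ (k + j - 1))"
proof -
  let ?x = "2 * real N"
  have "schur_bounded (Y * commutator (Dk k N) Z * Dk j N - Z * commutator (Dk j N) Y * Dk k N)
      (K * (real k * ?x ^ (k - 1) * c') * ?x ^ j + K' * (real j * ?x ^ (j - 1) * c) * ?x ^ k)"
    using assms
    by (intro schur_bounded_minus[of _ N N] schur_bounded_mult[of _ N N _ N]
        schur_bounded_commutator_Dk schur_bounded_Dk) (auto intro!: mult_carrier_mat[of _ N N])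
  moreover have "k + j - 1 = (k - 1) + j" "k + j - 1 = (j - 1) + k"
    using assms(10,11) by simp_all
  then have "?x ^ (k + j - 1) = ?x ^ (k - 1) * ?x ^ j" "?x ^ (k + j - 1) = ?x ^ (j - 1) * ?x ^ k"
    by (metis power_add)+
  ultimately show ?thesis
    using assms
    by (simp add: commutator_mult_mult[of _ N] Dk_comm algebra_simps)
qed

section \<open>Smooth functions on a compact interval\<close>

lemma smooth_fun_lipschitz_on:
  assumes "smooth_fun y"
  obtains L where "L-lipschitz_on {a..b} y"
proof -
  have y: "y differentiable at x" and y': "deriv y differentiable at x" for x
    using assms[unfolded smooth_fun_def, rule_format, of 0 x]
      assms[unfolded smooth_fun_def, rule_format, of 1 x]
    by simp_all
  have "continuous_on {a..b} (deriv y)"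
    using y' by (intro differentiable_imp_continuous_on differentiable_at_imp_differentiable_on) auto
  then obtain B where B: "0 \<le> B" "\<And>x. x \<in> {a..b} \<Longrightarrow> norm (deriv y x) \<le> B"
    using continuous_on_compact_bound[OF compact_Icc] by blast
  have "norm (y s - y t) \<le> B * norm (s - t)" if "s \<in> {a..b}" "t \<in> {a..b}" for s t
  proof (rule field_differentiable_bound[OF convex_real_interval(5) _ B(2) that])
    show "(y has_field_derivative deriv y x) (at x within {a..b})" for x
      using y DERIV_deriv_iff_real_differentiable has_field_derivative_at_within by blast
  qed
  then have "B-lipschitz_on {a..b} y"
    using B(1) by (intro lipschitz_onI) (simp_all add: dist_norm)
  then show ?thesis ..
qed

lemma smooth_fun_bounded_on:
  assumes "smooth_fun y"
  obtains K where "0 \<le> K" "\<And>x. x \<in> {a..b} \<Longrightarrow> \<bar>y x\<bar> \<le> K"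
proof -
  have "continuous_on {a..b} y"
    using assms[unfolded smooth_fun_def, rule_format, of 0]
    by (intro differentiable_imp_continuous_on differentiable_at_imp_differentiable_on) auto
  then obtain K where "0 \<le> K" "\<And>x. x \<in> {a..b} \<Longrightarrow> norm (y x) \<le> K"
    using continuous_on_compact_bound[OF compact_Icc] by blast
  then show ?thesis
    using that by simp
qed

section \<open>Diagonal matrices of samples\<close>

lemma Ysamp_carrier [simp]: "Ysamp y a b N \<in> carrier_mat N N"
  and dim_Ysamp [simp]: "dim_row (Ysamp y a b N) = N" "dim_col (Ysamp y a b N) = N"
  by (simp_all add: Ysamp_def)

lemma transpose_Ysamp: "transpose_mat (Ysamp y a b N) = Ysamp y a b N"
  by (rule eq_matI) (auto simp: Ysamp_def)

lemma Ysamp_comm: "Ysamp y a b N * Ysamp z a b N = Ysamp z a b N * Ysamp y a b N"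
  by (rule eq_matI)
    (auto simp: index_mult_mat_sum[of _ N N _ N] Ysamp_def if_distrib[of "\<lambda>x. x * _"]
      cong: if_cong simp del: index_mult_mat(1))

lemma index_commutator_Ysamp:
  assumes "A \<in> carrier_mat N N" "i < N" "l < N"
  shows "commutator A (Ysamp y a b N) $$ (i, l)
    = A $$ (i, l) * (y (grid_pt a b N l) - y (grid_pt a b N i))"
  using assms
  by (simp add: commutator_def index_mult_mat_sum[of _ N N _ N] Ysamp_def if_distrib[of "\<lambda>x. _ * x"]
      algebra_simps cong: if_cong del: index_mult_mat(1))

lemma schur_bounded_Ysamp:
  assumes "0 \<le> K" "\<And>i. i < N \<Longrightarrow> \<bar>y (grid_pt a b N i)\<bar> \<le> K"
  shows "schur_bounded (Ysamp y a b N) K"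
  using schur_bounded_cyclic_band[of "Ysamp y a b N" N K 0] assms by (simp add: Ysamp_def)

lemma grid_pt_mem:
  assumes "a \<le> b" "i \<le> N"
  shows "grid_pt a b N i \<in> {a..b}"
proof (cases "N = 0")
  case False
  then have "(b - a) * real i / real N \<le> b - a"
    using assms by (simp add: divide_le_eq mult_left_mono)
  then show ?thesis
    using assms by (simp add: grid_pt_def)
qed (simp add: grid_pt_def assms)

lemma grid_pt_step_le:
  assumes lip: "L-lipschitz_on {a..b} y" and per: "periodic_on_len (b - a) y"
    and "a \<le> b" "i < N"
  shows "\<bar>y (grid_pt a b N (Suc i mod N)) - y (grid_pt a b N i)\<bar> \<le> L * (b - a) / real N"
proof -
  have wrap: "y (grid_pt a b N (Suc i mod N)) = y (grid_pt a b N (Suc i))"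
  proof (cases "Suc i = N")
    case True
    then have "grid_pt a b N (Suc i mod N) = a" "grid_pt a b N (Suc i) = a + (b - a)"
      by (auto simp: grid_pt_def)
    then show ?thesis
      using per by (metis periodic_on_len_def)
  qed (use \<open>i < N\<close> in \<open>simp add: mod_succ_eq\<close>)
  have "dist (y (grid_pt a b N (Suc i))) (y (grid_pt a b N i))
      \<le> L * dist (grid_pt a b N (Suc i)) (grid_pt a b N i)"
    using assms by (intro lipschitz_onD[OF lip] grid_pt_mem) auto
  also have "dist (grid_pt a b N (Suc i)) (grid_pt a b N i) = (b - a) / real N"
    using \<open>a \<le> b\<close> by (simp add: grid_pt_def dist_real_def add_divide_distrib distrib_left)
  finally show ?thesis
    by (simp add: wrap dist_real_def)
qed

lemma schur_bounded_commutator_DF_Ysamp: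
  assumes "L-lipschitz_on {a..b} y" "periodic_on_len (b - a) y" "a \<le> b"
  shows "schur_bounded (commutator (DF N) (Ysamp y a b N)) (L * (b - a))"
proof -
  have L: "0 \<le> L * (b - a)"
    using lipschitz_on_nonneg[OF assms(1)] assms(3) by simp
  have "\<bar>commutator (DF N) (Ysamp y a b N) $$ (i, l)\<bar> \<le> of_bool (l = Suc i mod N) * (L * (b - a))"
    if "i < N" "l < N" for i l
  proof (cases "l = i")
    case False
    have step: "real N * \<bar>y (grid_pt a b N (Suc i mod N)) - y (grid_pt a b N i)\<bar> \<le> L * (b - a)"
      using grid_pt_step_le[OF assms \<open>i < N\<close>] \<open>i < N\<close> by (simp add: pos_le_divide_eq mult.commute)
    have "\<bar>commutator (DF N) (Ysamp y a b N) $$ (i, l)\<bar>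
        = of_bool (l = Suc i mod N) * (real N * \<bar>y (grid_pt a b N l) - y (grid_pt a b N i)\<bar>)"
      using that False by (simp add: index_commutator_Ysamp DF_def circM_def abs_mult)
    then show ?thesis
      using step by auto
  qed (use that L in \<open>simp add: index_commutator_Ysamp\<close>)
  then show ?thesis
    using schur_bounded_cyclic_band[of _ N 0 "L * (b - a)"] L by simp
qed

lemma commutator_DB_Ysamp:
  "commutator (DB N) (Ysamp y a b N) = transpose_mat (commutator (DF N) (Ysamp y a b N))"
  by (simp add: DB_def commutator_uminus_transpose[of "DF N" N] transpose_Ysamp)

lemma schur_bounded_commutator_Ysamp_Dk:
  assumes "a \<le> b" "1 \<le> k" "1 \<le> j"
    and "Lk-lipschitz_on {a..b} yk" "periodic_on_len (b - a) yk"
    and "0 \<le> Kk" "\<And>x. x \<in> {a..b} \<Longrightarrow> \<bar>yk x\<bar> \<le> Kk"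
    and "Lj-lipschitz_on {a..b} yj" "periodic_on_len (b - a) yj"
    and "0 \<le> Kj" "\<And>x. x \<in> {a..b} \<Longrightarrow> \<bar>yj x\<bar> \<le> Kj"
  shows "schur_bounded (commutator (Ysamp yk a b N * Dk k N) (Ysamp yj a b N * Dk j N))
    ((Kk * real k * (Lj * (b - a)) + Kj * real j * (Lk * (b - a))) * (2 * real N) ^ (k + j - 1))"
  using assms grid_pt_mem[OF \<open>a \<le> b\<close>]
  by (intro schur_bounded_commutator_mult_Dk schur_bounded_Ysamp schur_bounded_commutator_DF_Ysamp)
    (auto simp: Ysamp_comm commutator_DB_Ysamp
      intro!: schur_bounded_transpose schur_bounded_commutator_DF_Ysamp)

theorem lemma4p6:
  fixes a b :: real and k j :: nat and yk yj :: "real \<Rightarrow> real"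
  assumes "a < b" and "k \<ge> 1" and "j \<ge> 1"
    and "smooth_fun yk" and "smooth_fun yj"
    and "periodic_on_len (b - a) yk" and "periodic_on_len (b - a) yj"
  shows "ht_le (\<lambda>N. commutator (Ysamp yk a b N * Dk k N) (Ysamp yj a b N * Dk j N)) (k + j - 1)"
proof -
  let ?P = "\<lambda>N. commutator (Ysamp yk a b N * Dk k N) (Ysamp yj a b N * Dk j N)"
  obtain Lk Lj where L: "Lk-lipschitz_on {a..b} yk" "Lj-lipschitz_on {a..b} yj"
    using smooth_fun_lipschitz_on assms(4,5) by metis
  obtain Kk Kj where K: "0 \<le> Kk" "\<And>x. x \<in> {a..b} \<Longrightarrow> \<bar>yk x\<bar> \<le> Kk"
    "0 \<le> Kj" "\<And>x. x \<in> {a..b} \<Longrightarrow> \<bar>yj x\<bar> \<le> Kj"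
    using smooth_fun_bounded_on assms(4,5) by metis
  define C where "C = Kk * real k * (Lj * (b - a)) + Kj * real j * (Lk * (b - a))"
  have bound: "schur_bounded (?P N) (C * (2 * real N) ^ (k + j - 1))" for N
    unfolding C_def using assms L K by (intro schur_bounded_commutator_Ysamp_Dk) auto
  have "norm (mat_norm2 (?P N)) \<le> C * 2 ^ (k + j - 1) * norm (real N ^ (k + j - 1))" for N
    using schur_test[OF bound[of N]] by (simp add: power_mult_distrib mult_ac)
  then show ?thesis
    unfolding ht_le_def by (intro bigoI always_eventually allI)
qed

end
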